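(* Let $p,n\in\mathbb N$ with $p\ge n\ge 10$, and let $G\in \mathrm{Ex}(p;T_n'')$. If $G$ is connected, then $\Delta(G)=n-5$.
   Context: All graphs are finite simple graphs; $\Delta(G)$ is the maximum degree of $G$. For a graph $L$, $\mathrm{ex}(p;L)$ is the maximum number of edges in a graph on $p$ vertices containing no subgraph isomorphic to $L$, and $\mathrm{Ex}(p;L)$ is the set of graphs on $p$ vertices containing no copy of $L$ and having exactly $\mathrm{ex}(p;L)$ edges. For $n\ge 6$, $T_n''$ is the tree on vertex set $\{v_0,\ldots,v_{n-1}\}$ with edge set $\{v_0v_1,\ldots,v_0v_{n-4},\ v_1v_{n-3},\ v_1v_{n-2},\ v_2v_{n-1}\}$. *)

theory Defs
  imports Main
begin

definition simple_graph :: "'a set \<Rightarrow> 'a set set \<Rightarrow> bool" where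
  "simple_graph V E \<longleftrightarrow> finite V \<and> (\<forall>e\<in>E. e \<subseteq> V \<and> card e = 2)"

definition contains_copy :: "'a set \<Rightarrow> 'a set set \<Rightarrow> 'b set \<Rightarrow> 'b set set \<Rightarrow> bool" where
  "contains_copy V E VL EL \<longleftrightarrow>
     (\<exists>f. inj_on f VL \<and> f ` VL \<subseteq> V \<and> (\<forall>e\<in>EL. f ` e \<in> E))"

definition ex_num :: "nat \<Rightarrow> 'b set \<Rightarrow> 'b set set \<Rightarrow> nat" where
  "ex_num p VL EL = Max {card E | E. simple_graph {0..<p} E \<and> \<not> contains_copy {0..<p} E VL EL}"

definition in_Ex :: "nat \<Rightarrow> 'b set \<Rightarrow> 'b set set \<Rightarrow> 'a set \<Rightarrow> 'a set set \<Rightarrow> bool" where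
  "in_Ex p VL EL V E \<longleftrightarrow> simple_graph V E \<and> card V = p \<and> \<not> contains_copy V E VL EL
      \<and> card E = ex_num p VL EL"

definition degree :: "'a set \<Rightarrow> 'a set set \<Rightarrow> 'a \<Rightarrow> nat" where
  "degree V E v = card {u\<in>V. {u, v} \<in> E}"

definition max_degree :: "'a set \<Rightarrow> 'a set set \<Rightarrow> nat" where
  "max_degree V E = Max (degree V E ` V)"

definition connected_graph :: "'a set \<Rightarrow> 'a set set \<Rightarrow> bool" where
  "connected_graph V E \<longleftrightarrow> V \<noteq> {} \<and>
     (\<forall>u\<in>V. \<forall>v\<in>V. (u, v) \<in> {(x, y). {x, y} \<in> E}\<^sup>*)"

text \<open>The tree T_n'' on vertices 0..n-1 (v_i = i).\<close>
definition Tpp_V :: "nat \<Rightarrow> nat set" where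
  "Tpp_V n = {0..<n}"

definition Tpp_E :: "nat \<Rightarrow> nat set set" where
  "Tpp_E n = {{0, i} | i. 1 \<le> i \<and> i \<le> n - 4} \<union> {{1, n - 3}, {1, n - 2}, {2, n - 1}}"

end

theory Submission
  imports Defs
begin

text \<open>
  Let \<open>x\<close> be a vertex of maximum degree \<open>\<Delta>\<close> of an extremal graph.
  If \<open>\<Delta> \<le> n - 6\<close>, an edge can be added without creating a vertex of degree \<open>n - 4\<close>,
  which the centre \<open>v\<^sub>0\<close> of a copy of \<open>T\<^sub>n''\<close> needs.
  If \<open>\<Delta> \<ge> n - 4\<close>, we find a vertex set \<open>S\<close> with \<open>|S| \<le> n - 1\<close>, usually the closed
  neighbourhood of \<open>x\<close> plus at most two vertices, met by fewer than \<open>|S|(|S|-1)/2\<close> edges.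
  Replacing these edges by a clique on \<open>S\<close> increases the number of edges without creating
  \<open>T\<^sub>n''\<close>: a copy, being connected, lies inside \<open>S\<close> (too small) or avoids \<open>S\<close> (so was
  already there). The edges meeting \<open>S\<close> are counted by a weighted degree sum, which is kept
  small because every richer local configuration around \<open>x\<close> would embed \<open>T\<^sub>n''\<close> with
  \<open>v\<^sub>0 = x\<close>. Connectivity enters when \<open>\<Delta> \<in> {n - 3, n - 2}\<close>: some neighbour of \<open>x\<close> then has
  a neighbour outside the closed neighbourhood of \<open>x\<close>.
\<close>

lemma card_insert_le_Suc: "card (insert a A) \<le> Suc (card A)"
  by (cases "finite A") (auto simp: card_insert_if)

lemma card_le_card_Diff_add: "finite A \<Longrightarrow> A \<inter> B \<subseteq> C \<Longrightarrow> finite C \<Longrightarrow> card A \<le> card (A - B) + card C"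
  by (metis card_Int_Diff card_mono add.commute add_le_mono1 finite_Int)

lemma obtain_two_elements:
  assumes "2 \<le> card A"
  obtains a b where "a \<in> A" "b \<in> A" "a \<noteq> b"
proof -
  obtain B where "B \<subseteq> A" "card B = 2" using obtain_subset_with_card_n[OF assms] by metis
  then show ?thesis using that unfolding card_2_iff by blast
qed

lemma sum_le_remove_bound:
  fixes f :: "'a \<Rightarrow> nat"
  assumes "a \<in> A" and "finite A" and "\<And>v. v \<in> A - {a} \<Longrightarrow> f v \<le> K"
  shows "sum f A \<le> f a + (card A - 1) * K"
proof -
  have "sum f A = f a + sum f (A - {a})" by (rule sum.remove[OF assms(2,1)])
  moreover have "sum f (A - {a}) \<le> card (A - {a}) * K"
    using sum_bounded_above[of "A - {a}" f K] assms(3) by simp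
  ultimately show ?thesis using assms(1,2) by simp
qed

lemma card_filter_eq_sum: "finite A \<Longrightarrow> card {x\<in>A. P x} = (\<Sum>x\<in>A. of_bool (P x))"
  by (simp add: Collect_conj_eq)

lemma sum_le_with_exceptions:
  fixes f :: "'a \<Rightarrow> nat"
  assumes "finite A" and "\<And>v. v \<in> A \<Longrightarrow> f v \<le> K + (if v \<in> Q then L else 0)"
    and "finite Q"
  shows "sum f A \<le> K * card A + L * card Q"
proof -
  have "sum f A \<le> (\<Sum>v\<in>A. K + L * of_bool (v \<in> Q))"
    by (rule sum_mono) (use assms(2) in fastforce)
  also have "\<dots> = K * card A + L * card {v\<in>A. v \<in> Q}"
    using assms(1) by (simp add: sum.distrib card_filter_eq_sum sum_distrib_left)
  also have "card {v\<in>A. v \<in> Q} \<le> card Q" by (rule card_mono[OF assms(3)]) auto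
  finally show ?thesis by simp
qed

section \<open>Simple graphs\<close>

definition neighbours :: "'a set \<Rightarrow> 'a set set \<Rightarrow> 'a \<Rightarrow> 'a set" where
  "neighbours V E v = {u\<in>V. {u, v} \<in> E}"

lemma degree_eq_card_neighbours: "degree V E v = card (neighbours V E v)"
  by (simp add: degree_def neighbours_def)

locale finite_simple_graph =
  fixes V :: "'a set" and E :: "'a set set"
  assumes simple: "simple_graph V E"
begin

abbreviation N where "N \<equiv> neighbours V E"
abbreviation d where "d v \<equiv> card (N v)"

text \<open>Summed over \<open>v \<in> S\<close>, \<open>weight S v\<close> counts every edge meeting \<open>S\<close> twice.\<close>
abbreviation weight where "weight S v \<equiv> d v + card (N v - S)"

lemma finite_V: "finite V" using simple by (simp add: simple_graph_def)
lemma edge_subset: "e \<in> E \<Longrightarrow> e \<subseteq> V" using simple by (simp add: simple_graph_def)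
lemma card_edge: "e \<in> E \<Longrightarrow> card e = 2" using simple by (simp add: simple_graph_def)
lemma finite_E: "finite E"
  by (rule finite_subset[of _ "Pow V"]) (use edge_subset finite_V in auto)
lemma neighbours_subset: "N v \<subseteq> V" by (auto simp: neighbours_def)
lemma finite_neighbours[simp]: "finite (N v)" using finite_V neighbours_subset finite_subset by blast
lemma not_self_neighbour: "v \<notin> N v"
  using card_edge by (fastforce simp: neighbours_def)
lemma neighbours_sym: "u \<in> N v \<Longrightarrow> v \<in> N u"
  using edge_subset by (auto simp: neighbours_def insert_commute)
lemma neighboursI: "{u, v} \<in> E \<Longrightarrow> u \<in> N v"
  using edge_subset by (auto simp: neighbours_def)
lemma neighboursD: "u \<in> N v \<Longrightarrow> {u, v} \<in> E \<and> u \<in> V"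
  by (auto simp: neighbours_def)
lemma edge_if_neighbour: "u \<in> N v \<Longrightarrow> {v, u} \<in> E"
  by (auto simp: neighbours_def insert_commute)
lemma in_V_if_neighbour: "u \<in> N v \<Longrightarrow> v \<in> V" using neighbours_sym neighbours_subset by blast

lemma edge_other_end:
  assumes "e \<in> E" "v \<in> e"
  obtains u where "e = {u, v}" "u \<noteq> v"
proof -
  obtain a b where ab: "e = {a, b}" "a \<noteq> b" using card_edge[OF assms(1)] unfolding card_2_iff by blast
  then show ?thesis using that assms(2) by (auto simp: insert_commute)
qed

lemma card_neighbours_outside: "card (N v - S) = card {e\<in>E. v \<in> e \<and> \<not> e \<subseteq> insert v S}"
proof -
  have "(\<lambda>u. {u, v}) ` (N v - S) = {e\<in>E. v \<in> e \<and> \<not> e \<subseteq> insert v S}"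
  proof (rule set_eqI, rule iffI)
    fix e assume "e \<in> (\<lambda>u. {u, v}) ` (N v - S)"
    then show "e \<in> {e\<in>E. v \<in> e \<and> \<not> e \<subseteq> insert v S}"
      using neighboursD not_self_neighbour[of v] by auto
  next
    fix e assume e: "e \<in> {e\<in>E. v \<in> e \<and> \<not> e \<subseteq> insert v S}"
    then obtain u where u: "e = {u, v}" using edge_other_end by blast
    then have "u \<in> N v - S" using e neighboursI by auto
    then show "e \<in> (\<lambda>u. {u, v}) ` (N v - S)" using u by blast
  qed
  moreover have "inj_on (\<lambda>u. {u, v}) (N v - S)"
    by (rule inj_onI) (auto simp: doubleton_eq_iff)
  ultimately show ?thesis using card_image by metis
qed

lemma degree_eq_card_incident: "d v = card {e\<in>E. v \<in> e}"
proof -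
  have "\<not> e \<subseteq> {v}" if "e \<in> E" for e
    using card_edge[OF that] card_mono[of "{v}" e] by auto
  then have "{e\<in>E. v \<in> e \<and> \<not> e \<subseteq> insert v {}} = {e\<in>E. v \<in> e}" by auto
  then show ?thesis using card_neighbours_outside[of v "{}"] by simp
qed

lemma card_incidences_edge:
  assumes "e \<in> E"
  shows "card {v\<in>S. v \<in> e} + card {v\<in>S. v \<in> e \<and> \<not> e \<subseteq> S} = 2 * of_bool (e \<inter> S \<noteq> {})"
proof -
  obtain a b where ab: "e = {a, b}" "a \<noteq> b" using card_edge[OF assms] unfolding card_2_iff by blast
  consider "a \<in> S" "b \<in> S" | "a \<in> S" "b \<notin> S" | "a \<notin> S" "b \<in> S" | "a \<notin> S" "b \<notin> S" by blast
  then show ?thesis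
  proof cases
    case 1
    then have c: "{v\<in>S. v \<in> e} = e" "{v\<in>S. v \<in> e \<and> \<not> e \<subseteq> S} = {}" using ab by auto
    show ?thesis unfolding c using card_edge[OF assms] 1 ab by auto
  next
    case 2
    then have c: "{v\<in>S. v \<in> e} = {a}" "{v\<in>S. v \<in> e \<and> \<not> e \<subseteq> S} = {a}" using ab by auto
    show ?thesis unfolding c using 2 ab by auto
  next
    case 3
    then have c: "{v\<in>S. v \<in> e} = {b}" "{v\<in>S. v \<in> e \<and> \<not> e \<subseteq> S} = {b}" using ab by auto
    show ?thesis unfolding c using 3 ab by auto
  next
    case 4
    then have c: "{v\<in>S. v \<in> e} = {}" "{v\<in>S. v \<in> e \<and> \<not> e \<subseteq> S} = {}" using ab by auto
    show ?thesis unfolding c using 4 ab by auto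
  qed
qed

lemma twice_card_meeting_eq_sum:
  assumes "finite S"
  shows "2 * card {e\<in>E. e \<inter> S \<noteq> {}} = (\<Sum>v\<in>S. weight S v)"
proof -
  have "(\<Sum>v\<in>S. weight S v)
      = (\<Sum>v\<in>S. \<Sum>e\<in>E. of_bool (v \<in> e) + of_bool (v \<in> e \<and> \<not> e \<subseteq> S))"
  proof (rule sum.cong[OF refl])
    fix v assume "v \<in> S"
    show "weight S v = (\<Sum>e\<in>E. of_bool (v \<in> e) + of_bool (v \<in> e \<and> \<not> e \<subseteq> S))"
      unfolding degree_eq_card_incident card_neighbours_outside insert_absorb[OF \<open>v \<in> S\<close>]
        card_filter_eq_sum[OF finite_E] sum.distrib by simp
  qed
  also have "\<dots> = (\<Sum>e\<in>E. \<Sum>v\<in>S. of_bool (v \<in> e) + of_bool (v \<in> e \<and> \<not> e \<subseteq> S))"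
    by (rule sum.swap)
  also have "\<dots> = (\<Sum>e\<in>E. 2 * of_bool (e \<inter> S \<noteq> {}))"
  proof (rule sum.cong[OF refl])
    fix e assume "e \<in> E"
    show "(\<Sum>v\<in>S. of_bool (v \<in> e) + of_bool (v \<in> e \<and> \<not> e \<subseteq> S)) = (2::nat) * of_bool (e \<inter> S \<noteq> {})"
      using card_incidences_edge[OF \<open>e \<in> E\<close>, of S] unfolding sum.distrib card_filter_eq_sum[OF assms] .
  qed
  also have "\<dots> = 2 * card {e\<in>E. e \<inter> S \<noteq> {}}"
    by (simp add: card_filter_eq_sum[OF finite_E] sum_distrib_left)
  finally show ?thesis by simp
qed

lemma connected_exit_closed_neighbourhood:
  assumes conn: "connected_graph V E" and "x \<in> V" and "y \<in> V" and "y \<notin> insert x (N x)"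
  shows "\<exists>u\<in>N x. \<exists>w\<in>N u. w \<notin> insert x (N x)"
proof (rule ccontr)
  assume closed: "\<not> ?thesis"
  have "(x, y) \<in> {(a, b). {a, b} \<in> E}\<^sup>*" using conn assms(2,3) by (simp add: connected_graph_def)
  then have "y \<in> insert x (N x)"
  proof (induction rule: rtrancl_induct)
    case (step z z')
    then have "z' \<in> N z" using neighboursI[of z' z] by (simp add: insert_commute)
    then show ?case using step closed by auto
  qed simp
  then show False using assms(4) by simp
qed

end

section \<open>The tree \<open>T\<^sub>n''\<close>\<close>

lemma Tpp_E_memI:
  "1 \<le> i \<Longrightarrow> i \<le> n - 4 \<Longrightarrow> {0, i} \<in> Tpp_E n"
  "{1, n - 3} \<in> Tpp_E n" "{1, n - 2} \<in> Tpp_E n" "{2, n - 1} \<in> Tpp_E n"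
  unfolding Tpp_E_def by blast+

lemma Tpp_E_subset: "6 \<le> n \<Longrightarrow> e \<in> Tpp_E n \<Longrightarrow> e \<subseteq> {0..<n}"
  unfolding Tpp_E_def by auto

lemma Tpp_connected:
  assumes "6 \<le> n" and edge: "\<And>i j. {i, j} \<in> Tpp_E n \<Longrightarrow> P i \<longleftrightarrow> P j" and "i < n"
  shows "P i \<longleftrightarrow> P 0"
proof -
  have P1: "P 1 \<longleftrightarrow> P 0" and P2: "P 2 \<longleftrightarrow> P 0"
    using edge[OF Tpp_E_memI(1)[of 1]] edge[OF Tpp_E_memI(1)[of 2]] assms(1) by auto
  consider "i = 0" | "1 \<le> i \<and> i \<le> n - 4" | "i = n - 3" | "i = n - 2" | "i = n - 1"
    using assms(3) by linarith
  then show ?thesis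
  proof cases
    case 2 then show ?thesis using edge[OF Tpp_E_memI(1)] by auto
  next
    case 3 then show ?thesis using edge[OF Tpp_E_memI(2)] P1 by auto
  next
    case 4 then show ?thesis using edge[OF Tpp_E_memI(3)] P1 by auto
  next
    case 5 then show ?thesis using edge[OF Tpp_E_memI(4)] P2 by auto
  qed simp
qed

lemma Tpp_free_if_degree_lt:
  assumes "finite V" and "4 < n" and small: "\<And>w. w \<in> V \<Longrightarrow> degree V E w < n - 4"
  shows "\<not> contains_copy V E (Tpp_V n) (Tpp_E n)"
proof
  assume "contains_copy V E (Tpp_V n) (Tpp_E n)"
  then obtain f where f: "inj_on f {0..<n}" "f ` {0..<n} \<subseteq> V" "\<forall>e\<in>Tpp_E n. f ` e \<in> E"
    unfolding contains_copy_def Tpp_V_def by auto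
  have leaves: "{1..n-4} \<subseteq> {0..<n}" using assms(2) by auto
  have "f ` {1..n-4} \<subseteq> {u\<in>V. {u, f 0} \<in> E}"
  proof
    fix y assume "y \<in> f ` {1..n-4}"
    then obtain i where i: "1 \<le> i" "i \<le> n - 4" "y = f i" by auto
    have "f ` {0, i} \<in> E" using f(3) Tpp_E_memI(1)[OF i(1,2)] by (rule bspec)
    then have "{f i, f 0} \<in> E" by (simp add: insert_commute)
    moreover have "f i \<in> V" using f(2) leaves i(1,2) by auto
    ultimately show "y \<in> {u\<in>V. {u, f 0} \<in> E}" using i(3) by simp
  qed
  then have "card (f ` {1..n-4}) \<le> degree V E (f 0)"
    unfolding degree_def by (rule card_mono[rotated]) (use assms(1) in simp)
  moreover have "card (f ` {1..n-4}) = n - 4"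
    using card_image[OF inj_on_subset[OF f(1) leaves]] by simp
  moreover have "degree V E (f 0) < n - 4" using f(2) assms(2) by (intro small) auto
  ultimately show False by linarith
qed

section \<open>Extremal \<open>T\<^sub>n''\<close>-free graphs\<close>

lemma simple_graph_bij_image:
  assumes "simple_graph V E" and h: "bij_betw h V W"
  shows "simple_graph W ((`) h ` E)"
  unfolding simple_graph_def
proof (intro conjI ballI)
  show "finite W" using assms bij_betw_finite by (auto simp: simple_graph_def)
  fix e assume "e \<in> (`) h ` E"
  then obtain e' where e': "e' \<in> E" "e = h ` e'" by auto
  then have "e' \<subseteq> V" "card e' = 2" using assms(1) by (auto simp: simple_graph_def)
  then show "e \<subseteq> W" using e'(2) h by (auto simp: bij_betw_def)
  have "inj_on h e'" using h \<open>e' \<subseteq> V\<close> by (meson bij_betw_def inj_on_subset)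
  then show "card e = 2" using e'(2) \<open>card e' = 2\<close> card_image by metis
qed

lemma contains_copy_bij_image:
  assumes h: "bij_betw h V W" and sub: "\<forall>e\<in>E. e \<subseteq> V"
    and "contains_copy W ((`) h ` E) VL EL"
  shows "contains_copy V E VL EL"
proof -
  obtain f where f: "inj_on f VL" "f ` VL \<subseteq> W" "\<forall>e\<in>EL. f ` e \<in> (`) h ` E"
    using assms(3) unfolding contains_copy_def by blast
  define g where "g = inv_into V h"
  have g: "bij_betw g W V" using h bij_betw_inv_into by (simp add: g_def)
  show ?thesis
    unfolding contains_copy_def
  proof (intro exI[of _ "g \<circ> f"] conjI ballI)
    show "inj_on (g \<circ> f) VL" using f(1,2) g by (meson bij_betw_def comp_inj_on inj_on_subset)
    show "(g \<circ> f) ` VL \<subseteq> V" using f(2) g by (auto simp: bij_betw_def)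
    fix e assume "e \<in> EL"
    then obtain e' where e': "e' \<in> E" "f ` e = h ` e'" using f(3) by auto
    have "g ` h ` e' = e'"
      using sub e'(1) h by (auto simp: g_def bij_betw_def image_image inv_into_f_f subset_iff)
    then show "(g \<circ> f) ` e \<in> E" using e' by (metis image_comp)
  qed
qed

lemma card_le_ex_num:
  assumes "simple_graph V E" and "card V = p" and "\<not> contains_copy V E VL EL"
  shows "card E \<le> ex_num p VL EL"
proof -
  have sub: "\<forall>e\<in>E. e \<subseteq> V" using assms(1) by (simp add: simple_graph_def)
  obtain h where h: "bij_betw h V {0..<p}"
    using ex_bij_betw_finite_nat assms(1,2) by (force simp: simple_graph_def)
  have "inj_on ((`) h) E"
    using sub h by (intro inj_onI) (metis bij_betw_def inj_on_image_eq_iff)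
  then have card_image_E: "card ((`) h ` E) = card E" by (rule card_image)
  have "finite {E. simple_graph {0..<p} E \<and> \<not> contains_copy {0..<p} E VL EL}"
    by (rule finite_subset[of _ "Pow (Pow {0..<p})"]) (auto simp: simple_graph_def)
  moreover have "simple_graph {0..<p} ((`) h ` E)" by (rule simple_graph_bij_image[OF assms(1) h])
  moreover have "\<not> contains_copy {0..<p} ((`) h ` E) VL EL"
    using contains_copy_bij_image[OF h sub] assms(3) by blast
  ultimately have "card ((`) h ` E) \<le> ex_num p VL EL" unfolding ex_num_def by (intro Max_ge) auto
  then show ?thesis using card_image_E by simp
qed

locale Tpp_extremal = finite_simple_graph +
  fixes n :: nat
  assumes n_ge_10: "10 \<le> n" and n_le_card_V: "n \<le> card V"
    and Tpp_free: "\<not> contains_copy V E (Tpp_V n) (Tpp_E n)"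
    and extremal: "\<And>E'. simple_graph V E' \<Longrightarrow> \<not> contains_copy V E' (Tpp_V n) (Tpp_E n)
      \<Longrightarrow> card E' \<le> card E"
begin

text \<open>The copy sends \<open>v\<^sub>0, v\<^sub>1, v\<^sub>2\<close> to \<open>v0, v1, v2\<close>, the leaves \<open>v\<^bsub>n-3\<^esub>, v\<^bsub>n-2\<^esub>, v\<^bsub>n-1\<^esub>\<close>
  to \<open>a1, a2, b\<close>, and the leaves \<open>v\<^sub>3, \<dots>, v\<^bsub>n-4\<^esub>\<close> to further neighbours of \<open>v0\<close>.\<close>
lemma Tpp_copyI:
  assumes v1: "v1 \<in> N v0" and v2: "v2 \<in> N v0" and a1: "a1 \<in> N v1" and a2: "a2 \<in> N v1"
    and b: "b \<in> N v2" and dist: "distinct [v0, v1, v2, a1, a2, b]"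
    and many: "n - 6 \<le> card (N v0 - {v1, v2, a1, a2, b})"
  shows "contains_copy V E (Tpp_V n) (Tpp_E n)"
proof -
  obtain L where L: "L \<subseteq> N v0 - {v1, v2, a1, a2, b}" "card L = n - 6" "finite L"
    using many obtain_subset_with_card_n by metis
  have "card {3..n-4} = card L" using L(2) n_ge_10 by simp
  then obtain g where g: "bij_betw g {3..n-4} L"
    using finite_same_card_bij[OF _ L(3)] by blast
  define f where "f i = (if i \<in> {3..n-4} then g i else if i = 0 then v0 else if i = 1 then v1
    else if i = 2 then v2 else if i = n - 3 then a1 else if i = n - 2 then a2 else b)" for i
  define P where "P = {0, 1, 2, n - 3, n - 2, n - 1}"
  have f_P: "f 0 = v0" "f 1 = v1" "f 2 = v2" "f (n - 3) = a1" "f (n - 2) = a2" "f (n - 1) = b"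
    using n_ge_10 by (auto simp: f_def)
  have image_P: "f ` P = {v0, v1, v2, a1, a2, b}" using f_P by (auto simp: P_def)
  have "distinct [0, 1, 2, n - 3, n - 2, n - 1]" using n_ge_10 by auto
  from distinct_card[OF this] have "card P = 6" unfolding P_def by simp
  moreover have "card (f ` P) = 6" unfolding image_P using distinct_card[OF dist] by simp
  ultimately have "card (f ` P) = card P" by simp
  then have inj_P: "inj_on f P" by (rule eq_card_imp_inj_on[rotated]) (simp add: P_def)
  have f_g: "f i = g i" if "i \<in> {3..n-4}" for i using that by (simp add: f_def)
  have "inj_on f {3..n-4} \<longleftrightarrow> inj_on g {3..n-4}" by (rule inj_on_cong) (rule f_g)
  then have inj_L: "inj_on f {3..n-4}" using g by (simp add: bij_betw_def)
  have "f ` {3..n-4} = g ` {3..n-4}" by (rule image_cong) (simp_all add: f_g)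
  then have image_L: "f ` {3..n-4} = L" using g by (simp add: bij_betw_def)
  have disjoint: "f ` P \<inter> f ` {3..n-4} = {}"
    using L(1) not_self_neighbour[of v0] unfolding image_P image_L by auto
  have split: "{0..<n} = P \<union> {3..n-4}" using n_ge_10 by (auto simp: P_def)
  have "inj_on f {0..<n}"
    unfolding split inj_on_Un using inj_P inj_L disjoint by blast
  moreover have "f ` {0..<n} \<subseteq> V"
  proof -
    have "{v0, v1, v2, a1, a2, b} \<subseteq> V"
      using v1 v2 a1 a2 b neighbours_subset in_V_if_neighbour by blast
    moreover have "L \<subseteq> V" using L(1) neighbours_subset by blast
    ultimately show ?thesis unfolding split image_Un image_P image_L by blast
  qed
  moreover have "f ` e \<in> E" if e: "e \<in> Tpp_E n" for e
  proof -
    have leaf: "f i \<in> N v0" if "1 \<le> i" "i \<le> n - 4" for i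
    proof (cases "i \<le> 2")
      case True
      then have "i = 1 \<or> i = 2" using that(1) by linarith
      then show ?thesis using v1 v2 f_P by auto
    next
      case False
      then have "f i \<in> f ` {3..n-4}" using that(2) by simp
      then show ?thesis using image_L L(1) by blast
    qed
    consider i where "e = {0, i}" "1 \<le> i" "i \<le> n - 4"
      | "e = {1, n - 3}" | "e = {1, n - 2}" | "e = {2, n - 1}"
      using e unfolding Tpp_E_def by blast
    then show ?thesis
    proof cases
      case (1 i)
      then show ?thesis using edge_if_neighbour[OF leaf[OF 1(2,3)]] f_P by simp
    next
      case 2
      then show ?thesis using edge_if_neighbour[OF a1] f_P by simp
    next
      case 3
      then show ?thesis using edge_if_neighbour[OF a2] f_P by simp
    next
      case 4
      then show ?thesis using edge_if_neighbour[OF b] f_P by simp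
    qed
  qed
  ultimately show ?thesis unfolding contains_copy_def Tpp_V_def by blast
qed

lemma no_Tpp_configuration:
  assumes "v1 \<in> N v0" "v2 \<in> N v0" "a1 \<in> N v1" "a2 \<in> N v1" "b \<in> N v2"
    and "distinct [v0, v1, v2, a1, a2, b]"
    and "N v0 \<inter> {v1, v2, a1, a2, b} \<subseteq> C" and "finite C"
    and "n - 6 + card C \<le> d v0"
  shows False
proof -
  have "d v0 \<le> card (N v0 - {v1, v2, a1, a2, b}) + card C"
    by (rule card_le_card_Diff_add) (use assms in auto)
  then have "n - 6 \<le> card (N v0 - {v1, v2, a1, a2, b})" using assms(9) by linarith
  then show False using Tpp_copyI assms(1-6) Tpp_free by blast
qed


lemma clique_replacement_Tpp_free:
  assumes "S \<subseteq> V" and "card S < n"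
  shows "\<not> contains_copy V ({e\<in>E. e \<inter> S = {}} \<union> {B. B \<subseteq> S \<and> card B = 2}) (Tpp_V n) (Tpp_E n)"
    (is "\<not> contains_copy V ?E' _ _")
proof
  assume "contains_copy V ?E' (Tpp_V n) (Tpp_E n)"
  then obtain f where f: "inj_on f {0..<n}" "f ` {0..<n} \<subseteq> V" "\<forall>e\<in>Tpp_E n. f ` e \<in> ?E'"
    unfolding contains_copy_def Tpp_V_def by blast
  have edge: "f a \<in> S \<longleftrightarrow> f b \<in> S" if "{a, b} \<in> Tpp_E n" for a b
  proof -
    have "f ` {a, b} \<in> ?E'" using f(3) that by (rule bspec)
    then have "{f a, f b} \<in> ?E'" by (simp only: image_insert image_empty)
    then show ?thesis by blast
  qed
  have same_side: "f i \<in> S \<longleftrightarrow> f 0 \<in> S" if "i < n" for i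
    by (rule Tpp_connected[OF _ edge that]) (use n_ge_10 in linarith)
  show False
  proof (cases "f 0 \<in> S")
    case True
    then have "f ` {0..<n} \<subseteq> S" using same_side by auto
    then have "card (f ` {0..<n}) \<le> card S"
      using card_mono finite_subset[OF assms(1) finite_V] by blast
    then show False using card_image[OF f(1)] assms(2) by simp
  next
    case False
    have "f ` e \<in> E" if e: "e \<in> Tpp_E n" for e
    proof -
      have "e \<subseteq> {0..<n}" using Tpp_E_subset[OF _ e] n_ge_10 by simp
      then have "f ` e \<inter> S = {}" using same_side False by auto
      moreover have "f ` e \<noteq> {}" using e unfolding Tpp_E_def by auto
      moreover have "f ` e \<in> ?E'" using f(3) e by (rule bspec)
      ultimately show ?thesis by blast
    qed
    then show False using Tpp_free f(1,2) unfolding contains_copy_def Tpp_V_def by blast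
  qed
qed

lemma sum_weight_ge_clique:
  assumes S: "S \<subseteq> V" and "card S \<le> n - 1"
  shows "card S * (card S - 1) \<le> (\<Sum>v\<in>S. weight S v)"
proof (rule ccontr)
  assume lt: "\<not> ?thesis"
  have fS: "finite S" using S finite_V finite_subset by blast
  define Out where "Out = {e\<in>E. e \<inter> S = {}}"
  define Clique where "Clique = {B. B \<subseteq> S \<and> card B = 2}"
  define Meet where "Meet = {e\<in>E. e \<inter> S \<noteq> {}}"
  have simple': "simple_graph V (Out \<union> Clique)"
    using simple S unfolding simple_graph_def Out_def Clique_def by auto
  have finite_Out: "finite Out" using finite_E by (simp add: Out_def)
  have finite_Clique: "finite Clique" using fS by (simp add: Clique_def finite_subset[of _ "Pow S"] subset_eq)
  have "B \<inter> S \<noteq> {}" if "B \<in> Clique" for B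
  proof -
    have "B \<subseteq> S" "card B = 2" using that by (auto simp: Clique_def)
    then show ?thesis by (metis Int_absorb2 card.empty zero_neq_numeral)
  qed
  then have "Out \<inter> Clique = {}" by (auto simp: Out_def)
  then have card_E': "card (Out \<union> Clique) = card Out + (card S choose 2)"
    using card_Un_disjoint[OF finite_Out finite_Clique] n_subsets[OF fS, of 2] by (simp add: Clique_def)
  have "E = Out \<union> Meet" "Out \<inter> Meet = {}" by (auto simp: Out_def Meet_def)
  then have card_E: "card E = card Out + card Meet"
    using card_Un_disjoint[OF finite_Out, of Meet] finite_E by (simp add: Meet_def)
  have "even (card S * (card S - 1))" by (cases "even (card S)") auto
  then have "card S * (card S - 1) = 2 * (card S choose 2)" by (simp add: choose_two)
  then have "card Meet < card S choose 2"
    using twice_card_meeting_eq_sum[OF fS] lt by (simp add: Meet_def)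
  then have "card E < card (Out \<union> Clique)" using card_E card_E' by simp
  moreover have "\<not> contains_copy V (Out \<union> Clique) (Tpp_V n) (Tpp_E n)"
    unfolding Out_def Clique_def using clique_replacement_Tpp_free[OF S] assms(2) n_ge_10 by simp
  ultimately show False using extremal[OF simple'] by fastforce
qed

lemma n_minus_5_le_max_degree:
  assumes "x \<in> V" and max: "\<forall>v\<in>V. d v \<le> d x"
  shows "n - 5 \<le> d x"
proof (rule ccontr)
  assume "\<not> ?thesis"
  then have small: "d w \<le> n - 6" if "w \<in> V" for w using max that by fastforce
  have "card (insert x (N x)) \<le> Suc (d x)" by (rule card_insert_le_Suc)
  moreover have "insert x (N x) \<subseteq> V" using assms(1) neighbours_subset by auto
  ultimately have "insert x (N x) \<noteq> V" using n_le_card_V small[OF assms(1)] n_ge_10 by auto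
  then obtain y where y: "y \<in> V" "y \<notin> insert x (N x)" using \<open>insert x (N x) \<subseteq> V\<close> by blast
  define E' where "E' = insert {x, y} E"
  have simple': "simple_graph V E'" using simple assms(1) y by (auto simp: E'_def simple_graph_def)
  have "{x, y} \<notin> E" using y neighboursI[of y x] by (auto simp: insert_commute)
  then have "card E' = Suc (card E)" using finite_E by (simp add: E'_def)
  moreover have "degree V E' w < n - 4" if "w \<in> V" for w
  proof -
    have "{u\<in>V. {u, w} \<in> E'} \<subseteq> insert (if w = x then y else x) (N w)"
      by (auto simp: E'_def neighbours_def doubleton_eq_iff)
    then have "degree V E' w \<le> card (insert (if w = x then y else x) (N w))"
      unfolding degree_def by (rule card_mono[rotated]) simp
    also have "\<dots> \<le> Suc (d w)" by (rule card_insert_le_Suc)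
    finally show ?thesis using small[OF that] n_ge_10 by linarith
  qed
  then have "\<not> contains_copy V E' (Tpp_V n) (Tpp_E n)"
    using Tpp_free_if_degree_lt[OF finite_V] n_ge_10 by simp
  ultimately show False using extremal[OF simple'] by simp
qed

lemma weight_le_twice_degree: "weight S v \<le> 2 * d v"
  using card_mono[of "N v" "N v - S"] by auto

lemma weight_antimono: "S \<subseteq> S' \<Longrightarrow> weight S' v \<le> weight S v"
  by (simp add: Diff_mono card_mono)

lemma sum_weight_closed_neighbourhood_ge:
  assumes x: "x \<in> V" and T: "T \<subseteq> V - insert x (N x)" and small: "d x + 1 + card T \<le> n - 1"
  shows "(d x + 1 + card T) * (d x + card T)
    \<le> d x + (\<Sum>v\<in>N x. weight (insert x (N x) \<union> T) v) + (\<Sum>v\<in>T. weight (insert x (N x) \<union> T) v)"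
proof -
  define S where "S = insert x (N x) \<union> T"
  have fT: "finite T" using T finite_V finite_subset by blast
  have S_V: "S \<subseteq> V" using x neighbours_subset T by (auto simp: S_def)
  have "card S = card (insert x (N x)) + card T"
    unfolding S_def by (rule card_Un_disjoint) (use fT T in auto)
  then have card_S: "card S = d x + 1 + card T" using not_self_neighbour[of x] by simp
  have "(\<Sum>v\<in>S. weight S v) = (\<Sum>v\<in>insert x (N x). weight S v) + (\<Sum>v\<in>T. weight S v)"
    unfolding S_def by (rule sum.union_disjoint) (use fT T in auto)
  also have "(\<Sum>v\<in>insert x (N x). weight S v) = weight S x + (\<Sum>v\<in>N x. weight S v)"
    using not_self_neighbour[of x] by (simp add: sum.insert)
  also have "N x - S = {}" by (auto simp: S_def)
  then have "weight S x = d x" by simp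
  finally show ?thesis using sum_weight_ge_clique[OF S_V] card_S small by (simp add: S_def)
qed

lemma sum_weight_neighbours_ge:
  assumes "x \<in> V" and "d x + 1 \<le> n - 1"
  shows "(d x + 1) * d x \<le> d x + (\<Sum>v\<in>N x. weight (insert x (N x)) v)"
  using sum_weight_closed_neighbourhood_ge[of x "{}"] assms by simp

end

section \<open>The neighbourhood of a vertex of maximum degree\<close>

locale Tpp_extremal_max_vertex = Tpp_extremal +
  fixes x
  assumes x_in_V: "x \<in> V" and max_deg: "\<forall>v\<in>V. d v \<le> d x"
begin

abbreviation closed_nb where "closed_nb \<equiv> insert x (N x)"
abbreviation outer where "outer u \<equiv> N u - closed_nb"

lemma degree_le_max: "v \<in> V \<Longrightarrow> d v \<le> d x"
  using max_deg by blast

lemma neighbour_degree_le_max: "u \<in> N v \<Longrightarrow> d u \<le> d x"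
  using degree_le_max neighbours_subset by blast

lemma weight_le_twice_max_degree: "w \<in> V \<Longrightarrow> weight S w \<le> 2 * d x"
  using weight_le_twice_degree[where S = S and v = w] degree_le_max by fastforce

lemma card_closed_nb: "card closed_nb = d x + 1"
  using not_self_neighbour[of x] by simp

lemma max_degree_ne_n_minus_2:
  assumes u0: "u0 \<in> N x" and w: "w \<in> outer u0"
  shows "d x \<noteq> n - 2"
proof
  assume D: "d x = n - 2"
  have few: "card (N v - {x, u0, w}) \<le> 1" if v: "v \<in> N x" "v \<noteq> u0" for v
  proof (rule ccontr)
    assume "\<not> ?thesis"
    then have "2 \<le> card (N v - {x, u0, w})" by simp
    then obtain a1 a2 where a: "a1 \<in> N v - {x, u0, w}" "a2 \<in> N v - {x, u0, w}" "a1 \<noteq> a2"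
      by (rule obtain_two_elements)
    have "distinct [x, v, u0, a1, a2, w]"
      using a v u0 w not_self_neighbour[of x] not_self_neighbour[of v] by auto
    moreover have "N x \<inter> {v, u0, a1, a2, w} \<subseteq> {v, u0, a1, a2}" using w by auto
    moreover have "n - 6 + card {v, u0, a1, a2} \<le> d x"
      using card_length[of "[v, u0, a1, a2]"] D n_ge_10 by simp
    ultimately show False using no_Tpp_configuration[OF v(1) u0 _ _] a w by blast
  qed
  have weight_v: "weight closed_nb v \<le> 6" if v: "v \<in> N x - {u0}" for v
  proof -
    have "d v \<le> card (N v - {x, u0, w}) + card {x, u0, w}"
      by (rule card_le_card_Diff_add) auto
    then have "d v \<le> 4" using few v card_length[of "[x, u0, w]"] by fastforce
    have "outer v \<subseteq> insert w (N v - {x, u0, w})" using u0 by auto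
    then have "card (outer v) \<le> card (insert w (N v - {x, u0, w}))"
      by (rule card_mono[rotated]) simp
    also have "\<dots> \<le> Suc (card (N v - {x, u0, w}))" by (rule card_insert_le_Suc)
    finally show ?thesis using \<open>d v \<le> 4\<close> few v by fastforce
  qed
  have weight_u0: "weight closed_nb u0 \<le> 2 * d x - 1"
  proof -
    have x_u0: "x \<in> N u0" using neighbours_sym[OF u0] .
    have "card (outer u0) \<le> card (N u0 - {x})" by (rule card_mono) auto
    also have "\<dots> = d u0 - 1" using x_u0 by simp
    finally have "card (outer u0) \<le> d u0 - 1" .
    moreover have "d u0 \<le> d x" using neighbour_degree_le_max[OF u0] .
    moreover have "d u0 \<ge> 1" using x_u0 card_gt_0_iff[of "N u0"] by fastforce
    ultimately show ?thesis by linarith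
  qed
  have "(\<Sum>v\<in>N x. weight closed_nb v) \<le> weight closed_nb u0 + (d x - 1) * 6"
    by (rule sum_le_remove_bound[OF u0 finite_neighbours]) (use weight_v in auto)
  moreover have "(d x + 1) * d x \<le> d x + (\<Sum>v\<in>N x. weight closed_nb v)"
    using sum_weight_neighbours_ge[OF x_in_V] D n_ge_10 by simp
  moreover have "8 * d x \<le> d x * d x" using D n_ge_10 by simp
  ultimately show False using weight_u0 D n_ge_10 by (simp add: algebra_simps)
qed

lemma outer_le_2_if_n_minus_3:
  assumes D: "d x = n - 3" and u0: "u0 \<in> N x"
  shows "card (outer u0) \<le> 2"
proof (rule ccontr)
  assume "\<not> ?thesis"
  then have three: "3 \<le> card (outer u0)" by simp
  have inner: "N v \<subseteq> {x, u0}" if v: "v \<in> N x" "v \<noteq> u0" for v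
  proof
    fix b assume b: "b \<in> N v"
    show "b \<in> {x, u0}"
    proof (rule ccontr)
      assume b_ne: "b \<notin> {x, u0}"
      have "card (outer u0) - card {b} \<le> card (outer u0 - {b})" by (rule diff_card_le_card_Diff) simp
      then have "2 \<le> card (outer u0 - {b})" using three by simp
      then obtain a1 a2 where a: "a1 \<in> outer u0 - {b}" "a2 \<in> outer u0 - {b}" "a1 \<noteq> a2"
        by (rule obtain_two_elements)
      have "distinct [x, u0, v, a1, a2, b]"
        using a v u0 b_ne b not_self_neighbour[of x] not_self_neighbour[of v] by auto
      moreover have "N x \<inter> {u0, v, a1, a2, b} \<subseteq> {u0, v, b}" using a by auto
      moreover have "n - 6 + card {u0, v, b} \<le> d x"
        using card_length[of "[u0, v, b]", simplified] D n_ge_10 by linarith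
      ultimately show False using no_Tpp_configuration[OF u0 v(1) _ _ b] a by blast
    qed
  qed
  have weight_v: "weight closed_nb v \<le> 2" if v: "v \<in> N x - {u0}" for v
  proof -
    have "d v \<le> card {x, u0}" using inner v by (intro card_mono) auto
    moreover have "outer v = {}" using inner v u0 by auto
    then have "card (outer v) = 0" by (simp only: card.empty)
    ultimately show ?thesis using card_length[of "[x, u0]", simplified] by linarith
  qed
  have "(\<Sum>v\<in>N x. weight closed_nb v) \<le> weight closed_nb u0 + (d x - 1) * 2"
    by (rule sum_le_remove_bound[OF u0 finite_neighbours]) (use weight_v in auto)
  moreover have "weight closed_nb u0 \<le> 2 * d x"
    using weight_le_twice_max_degree u0 neighbours_subset by blast
  moreover have "(d x + 1) * d x \<le> d x + (\<Sum>v\<in>N x. weight closed_nb v)"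
    using sum_weight_neighbours_ge[OF x_in_V] D n_ge_10 by simp
  moreover have "7 * d x \<le> d x * d x" using D n_ge_10 by simp
  ultimately show False using D n_ge_10 by (simp add: algebra_simps)
qed

lemma outer_le_1_if_n_minus_3:
  assumes D: "d x = n - 3" and u0: "u0 \<in> N x"
  shows "card (outer u0) \<le> 1"
proof (rule ccontr)
  assume "\<not> ?thesis"
  then have "2 \<le> card (outer u0)" by simp
  then obtain w1 w2 where w: "w1 \<in> outer u0" "w2 \<in> outer u0" "w1 \<noteq> w2"
    by (rule obtain_two_elements)
  have inner: "N v \<subseteq> {x, u0, w1, w2}" if v: "v \<in> N x" "v \<noteq> u0" for v
  proof
    fix b assume b: "b \<in> N v"
    show "b \<in> {x, u0, w1, w2}"
    proof (rule ccontr)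
      assume b_ne: "b \<notin> {x, u0, w1, w2}"
      have "distinct [x, u0, v, w1, w2, b]"
        using w v u0 b_ne b not_self_neighbour[of x] not_self_neighbour[of v] by auto
      moreover have "N x \<inter> {u0, v, w1, w2, b} \<subseteq> {u0, v, b}" using w by auto
      moreover have "n - 6 + card {u0, v, b} \<le> d x"
        using card_length[of "[u0, v, b]", simplified] D n_ge_10 by linarith
      ultimately show False using no_Tpp_configuration[OF u0 v(1) _ _ b] w by blast
    qed
  qed
  have weight_v: "weight closed_nb v \<le> 6" if v: "v \<in> N x - {u0}" for v
  proof -
    have "d v \<le> card {x, u0, w1, w2}" using inner v by (intro card_mono) auto
    moreover have "card (outer v) \<le> card {w1, w2}" using inner v u0 by (intro card_mono) auto
    ultimately show ?thesis
      using card_length[of "[x, u0, w1, w2]"] card_length[of "[w1, w2]"] by simp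
  qed
  have "(\<Sum>v\<in>N x. weight closed_nb v) \<le> weight closed_nb u0 + (d x - 1) * 6"
    by (rule sum_le_remove_bound[OF u0 finite_neighbours]) (use weight_v in auto)
  moreover have "weight closed_nb u0 \<le> d x + 2"
    using outer_le_2_if_n_minus_3[OF D u0] neighbour_degree_le_max[OF u0] by linarith
  moreover have "(d x + 1) * d x \<le> d x + (\<Sum>v\<in>N x. weight closed_nb v)"
    using sum_weight_neighbours_ge[OF x_in_V] D n_ge_10 by simp
  moreover have "7 * d x \<le> d x * d x" using D n_ge_10 by simp
  ultimately show False using D n_ge_10 by (simp add: algebra_simps)
qed

lemma outer_unique_if_n_minus_3:
  assumes D: "d x = n - 3"
    and u1: "u1 \<in> N x" and w1: "w1 \<in> outer u1" and u2: "u2 \<in> N x" and w2: "w2 \<in> outer u2"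
  shows "w1 = w2"
proof (rule ccontr)
  assume "w1 \<noteq> w2"
  have uniq: "a = b" if "u \<in> N x" "a \<in> outer u" "b \<in> outer u" for u a b
    using outer_le_1_if_n_minus_3[OF D that(1)] that(2,3) card_le_Suc0_iff_eq[of "outer u"] by auto
  have small: "d v \<le> 3" if v: "v \<in> N x" and wv: "wv \<in> outer v" for v wv
  proof -
    obtain u wu where u: "u \<in> N x" and wu: "wu \<in> outer u" and wne: "wu \<noteq> wv"
      using u1 w1 u2 w2 \<open>w1 \<noteq> w2\<close> by (cases "wv = w1") auto
    have uv: "u \<noteq> v" using uniq[OF v wv] wu wne by blast
    have "N v \<subseteq> {x, u, wv}"
    proof
      fix c assume c: "c \<in> N v"
      show "c \<in> {x, u, wv}"
      proof (rule ccontr)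
        assume c_ne: "c \<notin> {x, u, wv}"
        have c_N: "c \<in> N x" using uniq[OF v wv, of c] c c_ne by auto
        have "distinct [x, v, u, wv, c, wu]"
          using v u wv wu wne uv c_N c_ne c not_self_neighbour[of x] not_self_neighbour[of v] by auto
        moreover have "N x \<inter> {v, u, wv, c, wu} \<subseteq> {v, u, c}" using wv wu by auto
        moreover have "n - 6 + card {v, u, c} \<le> d x"
          using card_length[of "[v, u, c]", simplified] D n_ge_10 by linarith
        ultimately show False using no_Tpp_configuration[OF v u _ _ _] wv c wu by blast
      qed
    qed
    then have "d v \<le> card {x, u, wv}" by (intro card_mono) auto
    then show ?thesis using card_length[of "[x, u, wv]", simplified] by linarith
  qed
  have "7 \<le> d x" using D n_ge_10 by simp
  have weight_v: "weight closed_nb v \<le> d x" if v: "v \<in> N x" for v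
  proof (cases "outer v = {}")
    case True
    then have "card (outer v) = 0" by (simp only: card.empty)
    then show ?thesis using neighbour_degree_le_max[OF v] by linarith
  next
    case False
    then have "d v \<le> 3" using small v by blast
    moreover have "card (outer v) \<le> 1" using outer_le_1_if_n_minus_3[OF D v] .
    ultimately show ?thesis using \<open>7 \<le> d x\<close> by linarith
  qed
  have "(\<Sum>v\<in>N x. weight closed_nb v) \<le> weight closed_nb u1 + (d x - 1) * d x"
    by (rule sum_le_remove_bound[OF u1 finite_neighbours]) (use weight_v in auto)
  moreover have "weight closed_nb u1 \<le> 4"
    using small[OF u1 w1] outer_le_1_if_n_minus_3[OF D u1] by linarith
  moreover have "(d x + 1) * d x \<le> d x + (\<Sum>v\<in>N x. weight closed_nb v)"
    using sum_weight_neighbours_ge[OF x_in_V] D n_ge_10 by simp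
  moreover have "(d x - 1) * d x = d x * d x - d x" by (simp add: diff_mult_distrib)
  moreover have "(d x + 1) * d x = d x * d x + d x" by (simp add: algebra_simps)
  moreover have "7 * d x \<le> d x * d x" using \<open>7 \<le> d x\<close> by simp
  ultimately show False using \<open>7 \<le> d x\<close> by linarith
qed

lemma outer_not_subset_singleton_if_n_minus_3:
  assumes D: "d x = n - 3" and w: "w \<in> V - closed_nb"
  shows "\<exists>u\<in>N x. \<not> outer u \<subseteq> {w}"
proof (rule ccontr)
  assume "\<not> ?thesis"
  then have "outer v \<subseteq> {w}" if "v \<in> N x" for v using that by blast
  then have "N v - (closed_nb \<union> {w}) = {}" if "v \<in> N x" for v using that by blast
  then have "weight (closed_nb \<union> {w}) v \<le> d x" if v: "v \<in> N x" for v
    using neighbour_degree_le_max[OF v] v by (metis add_0_right card.empty)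
  then have "(\<Sum>v\<in>N x. weight (closed_nb \<union> {w}) v) \<le> d x * d x"
    using sum_bounded_above[of "N x" "weight (closed_nb \<union> {w})" "d x"] by simp
  moreover have "weight (closed_nb \<union> {w}) w \<le> 2 * d x"
    using weight_le_twice_max_degree w by blast
  moreover have "(d x + 2) * (d x + 1)
    \<le> d x + (\<Sum>v\<in>N x. weight (closed_nb \<union> {w}) v) + weight (closed_nb \<union> {w}) w"
    using sum_weight_closed_neighbourhood_ge[OF x_in_V, of "{w}"] w D n_ge_10 by simp
  ultimately show False by (simp add: algebra_simps)
qed

lemma max_degree_ne_n_minus_3:
  assumes u: "u \<in> N x" and w: "w \<in> outer u"
  shows "d x \<noteq> n - 3"
proof
  assume D: "d x = n - 3"
  have "w \<in> V - closed_nb" using w neighbours_subset by blast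
  then obtain u' where "u' \<in> N x" "\<not> outer u' \<subseteq> {w}"
    using outer_not_subset_singleton_if_n_minus_3[OF D] by blast
  then show False using outer_unique_if_n_minus_3[OF D u w] by blast
qed

lemma degree_split_closed_nb:
  assumes "u \<in> N x"
  shows "d u = 1 + card (N u \<inter> N x) + card (outer u)"
proof -
  have "N u = insert x ((N u \<inter> N x) \<union> outer u)" using neighbours_sym[OF assms] by blast
  moreover have "x \<notin> (N u \<inter> N x) \<union> outer u" using not_self_neighbour[of x] by blast
  moreover have "card ((N u \<inter> N x) \<union> outer u) = card (N u \<inter> N x) + card (outer u)"
    by (rule card_Un_disjoint) auto
  ultimately show ?thesis by (metis card_insert_disjoint finite_Un finite_neighbours finite_Diff
    finite_Int plus_1_eq_Suc add.assoc)
qed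

lemma sum_weight_two_outside_ge:
  assumes D: "d x = n - 4" and w: "w1 \<in> V - closed_nb" "w2 \<in> V - closed_nb" "w1 \<noteq> w2"
  shows "d x * d x + 4 * d x + 6
    \<le> (\<Sum>v\<in>N x. weight (closed_nb \<union> {w1, w2}) v)
       + weight (closed_nb \<union> {w1, w2}) w1 + weight (closed_nb \<union> {w1, w2}) w2"
proof -
  have T: "{w1, w2} \<subseteq> V - closed_nb" using w by auto
  have card_w: "card {w1, w2} = 2" using w(3) by simp
  then have "d x + 1 + card {w1, w2} \<le> n - 1" using D n_ge_10 by simp
  from sum_weight_closed_neighbourhood_ge[OF x_in_V T this]
  have "(d x + 1 + card {w1, w2}) * (d x + card {w1, w2})
    \<le> d x + (\<Sum>v\<in>N x. weight (closed_nb \<union> {w1, w2}) v)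
       + (\<Sum>v\<in>{w1, w2}. weight (closed_nb \<union> {w1, w2}) v)" .
  moreover have "(d x + 1 + card {w1, w2}) * (d x + card {w1, w2}) = d x * d x + 5 * d x + 6"
    using card_w by (simp add: algebra_simps)
  moreover have "(\<Sum>v\<in>{w1, w2}. weight (closed_nb \<union> {w1, w2}) v)
    = weight (closed_nb \<union> {w1, w2}) w1 + weight (closed_nb \<union> {w1, w2}) w2" using w(3) by simp
  ultimately show ?thesis by linarith
qed

lemma sum_weight_two_outside_gt:
  assumes D: "d x = n - 4" and w: "w1 \<in> V - closed_nb" "w2 \<in> V - closed_nb" "w1 \<noteq> w2"
  shows "d x * d x < (\<Sum>v\<in>N x. weight (closed_nb \<union> {w1, w2}) v)"
proof -
  have "weight (closed_nb \<union> {w1, w2}) w1 \<le> 2 * d x" "weight (closed_nb \<union> {w1, w2}) w2 \<le> 2 * d x"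
    using w(1,2) weight_le_twice_max_degree by auto
  then show ?thesis using sum_weight_two_outside_ge[OF assms] by linarith
qed

lemma two_outside_if_n_minus_4:
  assumes D: "d x = n - 4"
  obtains w1 w2 where "w1 \<in> V - closed_nb" "w2 \<in> V - closed_nb" "w1 \<noteq> w2"
proof -
  have "closed_nb \<subseteq> V" using x_in_V neighbours_subset by auto
  then have "card (V - closed_nb) = card V - (d x + 1)"
    using finite_V card_closed_nb by (simp add: card_Diff_subset)
  then have "2 \<le> card (V - closed_nb)" using n_le_card_V D n_ge_10 by simp
  then show ?thesis using that by (rule obtain_two_elements)
qed

lemma outer_empty_if_n_minus_4:
  assumes D: "d x = n - 4" and u0: "u0 \<in> N x" and three: "3 \<le> card (outer u0)"
    and v: "v \<in> N x" "v \<noteq> u0"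
  shows "outer v = {}"
proof (rule ccontr)
  assume "outer v \<noteq> {}"
  then obtain b where b: "b \<in> outer v" by blast
  have "card (outer u0) - card {b} \<le> card (outer u0 - {b})" by (rule diff_card_le_card_Diff) simp
  then have "2 \<le> card (outer u0 - {b})" using three by simp
  then obtain a1 a2 where a: "a1 \<in> outer u0 - {b}" "a2 \<in> outer u0 - {b}" "a1 \<noteq> a2"
    by (rule obtain_two_elements)
  have "distinct [x, u0, v, a1, a2, b]" using a v u0 b not_self_neighbour[of x] by auto
  moreover have "N x \<inter> {u0, v, a1, a2, b} \<subseteq> {u0, v}" using a b by auto
  moreover have "n - 6 + card {u0, v} \<le> d x"
    using card_length[of "[u0, v]", simplified] D n_ge_10 by linarith
  ultimately show False using no_Tpp_configuration[OF u0 v(1) _ _ _] a b by blast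
qed

text \<open>Each neighbour of \<open>x\<close> outside \<open>N u0\<close> misses \<open>u0\<close>, so has degree below \<open>d x\<close>;
  this saving pays for the outer neighbours of \<open>u0\<close>.\<close>
lemma outer_le_2_if_n_minus_4:
  assumes D: "d x = n - 4" and u0: "u0 \<in> N x"
  shows "card (outer u0) \<le> 2"
proof (rule ccontr)
  assume "\<not> ?thesis"
  then have three: "3 \<le> card (outer u0)" by simp
  note no_outer = outer_empty_if_n_minus_4[OF D u0 three]
  define K where "K = {v\<in>N x - {u0}. v \<notin> N u0}"
  have "N x - {u0} = K \<union> (N u0 \<inter> N x)" using not_self_neighbour[of u0] by (auto simp: K_def)
  then have "card (N x - {u0}) = card K + card (N u0 \<inter> N x)"
    by (simp only:) (rule card_Un_disjoint, auto simp: K_def)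
  then have "card K + card (N u0 \<inter> N x) = d x - 1" using u0 by simp
  then have outer_le_K: "card (outer u0) \<le> card K"
    using degree_split_closed_nb[OF u0] neighbour_degree_le_max[OF u0] by linarith
  have degree_K: "d v + of_bool (v \<notin> N u0) \<le> d x" if v: "v \<in> N x - {u0}" for v
  proof (cases "v \<in> N u0")
    case False
    have "N v \<subseteq> insert x (N x - {v, u0})"
      using no_outer[of v] v False not_self_neighbour[of v] neighbours_sym[of u0 v] by auto
    then have "d v \<le> card (insert x (N x - {v, u0}))" by (rule card_mono[rotated]) simp
    also have "\<dots> \<le> Suc (card (N x - {v, u0}))" by (rule card_insert_le_Suc)
    also have "card (N x - {v, u0}) = d x - 2" using v u0 by (simp add: card_Diff_subset)
    finally show ?thesis using False D n_ge_10 by simp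
  qed (use v neighbour_degree_le_max in auto)
  have "card K = (\<Sum>v\<in>N x - {u0}. of_bool (v \<notin> N u0))"
    unfolding K_def by (rule card_filter_eq_sum) simp
  then have "(\<Sum>v\<in>N x - {u0}. d v) + card K = (\<Sum>v\<in>N x - {u0}. d v + of_bool (v \<notin> N u0))"
    by (simp add: sum.distrib)
  also have "\<dots> \<le> (d x - 1) * d x"
    using sum_bounded_above[of "N x - {u0}" _ "d x"] degree_K u0 by simp
  finally have others: "(\<Sum>v\<in>N x - {u0}. d v) + card K \<le> (d x - 1) * d x" .
  have "2 \<le> card (outer u0)" using three by simp
  then obtain w1 w2 where w: "w1 \<in> outer u0" "w2 \<in> outer u0" "w1 \<noteq> w2"
    by (rule obtain_two_elements)
  let ?T = "closed_nb \<union> {w1, w2}"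
  have "(\<Sum>v\<in>N x. weight ?T v) \<le> (\<Sum>v\<in>N x. weight closed_nb v)"
    by (rule sum_mono) (rule weight_antimono, blast)
  also have "\<dots> = weight closed_nb u0 + (\<Sum>v\<in>N x - {u0}. weight closed_nb v)"
    by (rule sum.remove[OF finite_neighbours u0])
  also have "(\<Sum>v\<in>N x - {u0}. weight closed_nb v) = (\<Sum>v\<in>N x - {u0}. d v)"
    by (rule sum.cong[OF refl]) (use no_outer in auto)
  finally have "(\<Sum>v\<in>N x. weight ?T v) \<le> weight closed_nb u0 + (\<Sum>v\<in>N x - {u0}. d v)" .
  moreover have "weight closed_nb u0 \<le> d x + card K"
    using outer_le_K neighbour_degree_le_max[OF u0] by linarith
  moreover have "(d x - 1) * d x + d x = d x * d x" by (cases "d x") simp_all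
  moreover have "w1 \<in> V - closed_nb" "w2 \<in> V - closed_nb" using w neighbours_subset by auto
  ultimately show False using sum_weight_two_outside_gt[OF D _ _ w(3)] others by fastforce
qed

lemma outer_le_1_if_n_minus_4:
  assumes D: "d x = n - 4" and u0: "u0 \<in> N x"
  shows "card (outer u0) \<le> 1"
proof (rule ccontr)
  assume "\<not> ?thesis"
  then have "2 \<le> card (outer u0)" by simp
  then obtain w1 w2 where w: "w1 \<in> outer u0" "w2 \<in> outer u0" "w1 \<noteq> w2"
    by (rule obtain_two_elements)
  have "outer v \<subseteq> {w1, w2}" if v: "v \<in> N x" for v
  proof
    fix b assume b: "b \<in> outer v"
    show "b \<in> {w1, w2}"
    proof (rule ccontr)
      assume b_ne: "b \<notin> {w1, w2}"
      show False
      proof (cases "v = u0")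
        case True
        then have "{w1, w2, b} \<subseteq> outer u0" using w b by blast
        then have "card {w1, w2, b} \<le> card (outer u0)" by (rule card_mono[rotated]) simp
        moreover have "card {w1, w2, b} = 3" using w(3) b_ne by (auto simp: card_insert_if)
        ultimately show False using outer_le_2_if_n_minus_4[OF D u0] by linarith
      next
        case False
        have "distinct [x, u0, v, w1, w2, b]"
          using w v u0 b_ne b False not_self_neighbour[of x] by auto
        moreover have "N x \<inter> {u0, v, w1, w2, b} \<subseteq> {u0, v}" using w b by auto
        moreover have "n - 6 + card {u0, v} \<le> d x"
          using card_length[of "[u0, v]", simplified] D n_ge_10 by linarith
        ultimately show False using no_Tpp_configuration[OF u0 v _ _ _] w b by blast
      qed
    qed
  qed
  then have "N v - (closed_nb \<union> {w1, w2}) = {}" if "v \<in> N x" for v using that by blast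
  then have "weight (closed_nb \<union> {w1, w2}) v \<le> d x" if v: "v \<in> N x" for v
    using neighbour_degree_le_max[OF v] v by (metis add_0_right card.empty)
  then have "(\<Sum>v\<in>N x. weight (closed_nb \<union> {w1, w2}) v) \<le> d x * d x"
    using sum_bounded_above[of "N x" _ "d x"] by simp
  moreover have "w1 \<in> V - closed_nb" "w2 \<in> V - closed_nb" using w neighbours_subset by auto
  ultimately show False using sum_weight_two_outside_gt[OF D _ _ w(3)] by fastforce
qed

lemma exit_of_max_degree_if_n_minus_4:
  assumes D: "d x = n - 4"
  shows "\<exists>u\<in>N x. outer u \<noteq> {} \<and> d u = d x"
proof (rule ccontr)
  assume "\<not> ?thesis"
  then have low: "d u \<le> d x - 1" if "u \<in> N x" "outer u \<noteq> {}" for u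
    using that neighbour_degree_le_max by fastforce
  obtain w1 w2 where w: "w1 \<in> V - closed_nb" "w2 \<in> V - closed_nb" "w1 \<noteq> w2"
    using two_outside_if_n_minus_4[OF D] .
  have "weight (closed_nb \<union> {w1, w2}) v \<le> d x" if v: "v \<in> N x" for v
  proof -
    have "weight (closed_nb \<union> {w1, w2}) v \<le> weight closed_nb v" by (rule weight_antimono) blast
    moreover have "weight closed_nb v \<le> d x"
    proof (cases "outer v = {}")
      case True
      then have "card (outer v) = 0" by (simp only: card.empty)
      then show ?thesis using neighbour_degree_le_max[OF v] by linarith
    next
      case False
      then show ?thesis using low[OF v] outer_le_1_if_n_minus_4[OF D v] D n_ge_10 by linarith
    qed
    ultimately show ?thesis by linarith
  qed
  then have "(\<Sum>v\<in>N x. weight (closed_nb \<union> {w1, w2}) v) \<le> d x * d x"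
    using sum_bounded_above[of "N x" _ "d x"] by simp
  then show False using sum_weight_two_outside_gt[OF D w] by linarith
qed

lemma no_exit_of_max_degree_if_n_minus_4:
  assumes D: "d x = n - 4" and u: "u \<in> N x" "d u = d x" and wu: "wu \<in> outer u"
  shows False
proof -
  have uniq: "a = b" if "a \<in> outer u" "b \<in> outer u" for a b
    using outer_le_1_if_n_minus_4[OF D u(1)] that card_le_Suc0_iff_eq[of "outer u"] by auto
  have outer_wu: "card (outer wu) \<le> 1"
  proof (rule ccontr)
    assume "\<not> ?thesis"
    then have "2 \<le> card (outer wu)" by simp
    then obtain c1 c2 where c: "c1 \<in> outer wu" "c2 \<in> outer wu" "c1 \<noteq> c2"
      by (rule obtain_two_elements)
    have "outer u \<noteq> {}" using wu by blast
    then have "card (outer u) \<noteq> 0" by (simp only: card_0_eq[OF finite_Diff[OF finite_neighbours]]) simp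
    then have "card (outer u) = 1" using outer_le_1_if_n_minus_4[OF D u(1)] by linarith
    then have "card (N u \<inter> N x) < card (N x - {u})"
      using degree_split_closed_nb[OF u(1)] u D n_ge_10 by simp
    then have "\<not> N x - {u} \<subseteq> N u \<inter> N x"
      using card_mono[of "N u \<inter> N x" "N x - {u}"] by auto
    then obtain ub where ub: "ub \<in> N x" "ub \<noteq> u" "ub \<notin> N u" by blast
    have "c1 \<notin> N u" "c2 \<notin> N u" using uniq[OF wu] c not_self_neighbour by blast+
    then have "distinct [u, wu, x, c1, c2, ub]"
      using u wu c ub not_self_neighbour[of x] not_self_neighbour[of wu] by auto
    moreover have "N u \<inter> {wu, x, c1, c2, ub} \<subseteq> {wu, x}" using \<open>c1 \<notin> N u\<close> \<open>c2 \<notin> N u\<close> ub by auto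
    moreover have "n - 6 + card {wu, x} \<le> d u"
      using card_length[of "[wu, x]", simplified] u D n_ge_10 by linarith
    ultimately show False
      using no_Tpp_configuration[of wu u x, OF _ neighbours_sym[OF u(1)] _ _ ub(1)] wu c by blast
  qed
  obtain w1 w2 where "w1 \<in> V - closed_nb" "w2 \<in> V - closed_nb" "w1 \<noteq> w2"
    using two_outside_if_n_minus_4[OF D] .
  then obtain w2 where w2: "w2 \<in> V - closed_nb" "wu \<noteq> w2" by blast
  have wu_out: "wu \<in> V - closed_nb" using wu neighbours_subset by auto
  let ?T = "closed_nb \<union> {wu, w2}"
  have "weight ?T v \<le> d x + 1" if v: "v \<in> N x" for v
  proof -
    have "weight ?T v \<le> weight closed_nb v" by (rule weight_antimono) blast
    then show ?thesis using neighbour_degree_le_max[OF v] outer_le_1_if_n_minus_4[OF D v] by linarith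
  qed
  then have "(\<Sum>v\<in>N x. weight ?T v) \<le> d x * (d x + 1)"
    using sum_bounded_above[of "N x" _ "d x + 1"] by simp
  moreover have "weight ?T wu \<le> d x + 1"
  proof -
    have "weight ?T wu \<le> weight closed_nb wu" by (rule weight_antimono) blast
    moreover have "d wu \<le> d x" using wu_out degree_le_max by blast
    ultimately show ?thesis using outer_wu by linarith
  qed
  moreover have "weight ?T w2 \<le> 2 * d x" using w2 weight_le_twice_max_degree by blast
  moreover have "d x * (d x + 1) = d x * d x + d x" by (simp add: algebra_simps)
  ultimately show False using sum_weight_two_outside_ge[OF D wu_out w2] by linarith
qed

lemma max_degree_ne_n_minus_4: "d x \<noteq> n - 4"
  using exit_of_max_degree_if_n_minus_4 no_exit_of_max_degree_if_n_minus_4 by blast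

lemma neighbour_degree_ge_4_if_large:
  assumes D: "n - 1 \<le> d x"
  shows "\<exists>u\<in>N x. 4 \<le> d u"
proof (rule ccontr)
  assume "\<not> ?thesis"
  then have small: "d u \<le> 3" if "u \<in> N x" for u using that by fastforce
  obtain S where S: "S \<subseteq> N x" "card S = n - 1" "finite S"
    by (rule obtain_subset_with_card_n[OF D])
  have "weight S v \<le> 6" if "v \<in> S" for v
  proof -
    have "v \<in> N x" using S(1) that by blast
    then show ?thesis using weight_le_twice_degree[where S = S and v = v] small by fastforce
  qed
  then have "(\<Sum>v\<in>S. weight S v) \<le> card S * 6"
    using sum_bounded_above[of S "weight S" 6] by simp
  moreover have "S \<subseteq> V" using S(1) neighbours_subset by blast
  then have "card S * (card S - 1) \<le> (\<Sum>v\<in>S. weight S v)"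
    using sum_weight_ge_clique[OF \<open>S \<subseteq> V\<close>] S(2) by simp
  moreover have "card S * 6 < card S * (card S - 1)" using S(2) n_ge_10 by (intro mult_less_mono2) auto
  ultimately show False by linarith
qed

lemma neighbours_meet_if_large:
  assumes D: "n - 1 \<le> d x" and u0: "u0 \<in> N x" "4 \<le> d u0"
    and v: "v \<in> N x" "v \<noteq> u0" and b: "b \<in> N v" "b \<notin> {x, u0}"
  shows "v \<in> N u0 \<and> b \<in> N u0 \<and> d u0 = 4"
proof -
  have few: "card (N u0 - {x, v, b}) \<le> 1"
  proof (rule ccontr)
    assume "\<not> ?thesis"
    then have "2 \<le> card (N u0 - {x, v, b})" by simp
    then obtain a1 a2 where a: "a1 \<in> N u0 - {x, v, b}" "a2 \<in> N u0 - {x, v, b}" "a1 \<noteq> a2"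
      by (rule obtain_two_elements)
    have "distinct [x, u0, v, a1, a2, b]"
      using a v u0 b not_self_neighbour[of x] not_self_neighbour[of v] not_self_neighbour[of u0] by auto
    moreover have "N x \<inter> {u0, v, a1, a2, b} \<subseteq> {u0, v, a1, a2, b}" by blast
    moreover have "n - 6 + card {u0, v, a1, a2, b} \<le> d x"
      using card_length[of "[u0, v, a1, a2, b]", simplified] D n_ge_10 by linarith
    ultimately show False using no_Tpp_configuration[OF u0(1) v(1) _ _ b(1)] a by blast
  qed
  have "d u0 \<le> card (N u0 - {x, v, b}) + card (N u0 \<inter> {x, v, b})"
    by (rule card_le_card_Diff_add) auto
  then have "3 \<le> card (N u0 \<inter> {x, v, b})" using few u0(2) by linarith
  moreover have "card (N u0 \<inter> {x, v, b}) \<le> card {x, v, b}" by (rule card_mono) auto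
  ultimately have "N u0 \<inter> {x, v, b} = {x, v, b}"
    using card_length[of "[x, v, b]", simplified] card_subset_eq[of "{x, v, b}" "N u0 \<inter> {x, v, b}"]
    by fastforce
  moreover have "d u0 \<le> card (N u0 - {x, v, b}) + card {x, v, b}"
    by (rule card_le_card_Diff_add) auto
  ultimately show ?thesis using few card_length[of "[x, v, b]", simplified] u0(2) by auto
qed

lemma other_neighbours_degree_if_large:
  assumes D: "n - 1 \<le> d x" and u0: "u0 \<in> N x" "4 \<le> d u0"
  obtains Q where "finite Q" "card Q \<le> 3"
    "\<And>v. v \<in> N x - {u0} \<Longrightarrow> d v \<le> 2 + (if v \<in> Q then 2 else 0)"
proof
  let ?Q = "{v\<in>N x - {u0}. 3 \<le> d v}"
  note meet = neighbours_meet_if_large[OF D u0]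
  have Q_meet: "v \<in> N u0 \<and> d u0 = 4" if v: "v \<in> ?Q" for v
  proof -
    have "\<not> N v \<subseteq> {x, u0}"
    proof
      assume "N v \<subseteq> {x, u0}"
      then have "d v \<le> card {x, u0}" by (rule card_mono[rotated]) simp
      then show False using card_length[of "[x, u0]", simplified] v by simp
    qed
    then obtain b where "b \<in> N v" "b \<notin> {x, u0}" by blast
    then show ?thesis using meet[of v b] v by auto
  qed
  show "finite ?Q" by simp
  show "card ?Q \<le> 3"
  proof (cases "?Q = {}")
    case True
    then show ?thesis by (metis card.empty le0)
  next
    case False
    then obtain v where "v \<in> ?Q" by blast
    then have "d u0 = 4" using Q_meet by blast
    then have "card (N u0 - {x}) = 3" using neighbours_sym[OF u0(1)] by simp
    moreover have "?Q \<subseteq> N u0 - {x}" using Q_meet not_self_neighbour[of x] by auto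
    ultimately show ?thesis using card_mono[of "N u0 - {x}" ?Q] by simp
  qed
  fix v assume v: "v \<in> N x - {u0}"
  show "d v \<le> 2 + (if v \<in> ?Q then 2 else 0)"
  proof (cases "v \<in> ?Q")
    case True
    have x_v: "x \<noteq> v" using v not_self_neighbour[of x] by blast
    have "N v \<subseteq> {x, u0} \<union> (N u0 - {x, v})"
    proof
      fix b assume b: "b \<in> N v"
      show "b \<in> {x, u0} \<union> (N u0 - {x, v})"
      proof (cases "b \<in> {x, u0}")
        case False
        then show ?thesis using meet[of v b] v b not_self_neighbour[of v] by auto
      qed blast
    qed
    then have "d v \<le> card ({x, u0} \<union> (N u0 - {x, v}))" by (rule card_mono[rotated]) simp
    also have "\<dots> \<le> card {x, u0} + card (N u0 - {x, v})" by (rule card_Un_le)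
    also have "card (N u0 - {x, v}) = 2"
      using Q_meet[OF True] neighbours_sym[OF u0(1)] x_v by (simp add: card_Diff_subset)
    finally show ?thesis using card_length[of "[x, u0]", simplified] True by simp
  qed (use v in auto)
qed

lemma max_degree_lt_n_minus_1: "d x < n - 1"
proof (rule ccontr)
  assume "\<not> ?thesis"
  then have D: "n - 1 \<le> d x" by simp
  obtain u0 where u0: "u0 \<in> N x" "4 \<le> d u0" using neighbour_degree_ge_4_if_large[OF D] by blast
  obtain Q where Q: "finite Q" "card Q \<le> 3"
    and deg: "\<And>v. v \<in> N x - {u0} \<Longrightarrow> d v \<le> 2 + (if v \<in> Q then 2 else 0)"
    using other_neighbours_degree_if_large[OF D u0] by blast
  have weight_v: "weight S v \<le> 4 + (if v \<in> Q then 4 else 0)" if "v \<in> N x - {u0}" for S v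
    using weight_le_twice_degree[where S = S and v = v] deg[OF that] by (cases "v \<in> Q") auto
  have quadratic: "card S * 8 \<le> card S * (card S - 1)" if "card S = n - 1" for S :: "'a set"
    using that n_ge_10 by (intro mult_le_mono2) simp
  show False
  proof (cases "n \<le> d x")
    case True
    then have "n - 1 \<le> card (N x - {u0})" using u0 by simp
    then obtain S where S: "S \<subseteq> N x - {u0}" "card S = n - 1" "finite S"
      by (rule obtain_subset_with_card_n)
    have "(\<Sum>v\<in>S. weight S v) \<le> 4 * card S + 4 * card Q"
    proof (rule sum_le_with_exceptions[OF S(3) _ Q(1)])
      fix v assume "v \<in> S"
      then show "weight S v \<le> 4 + (if v \<in> Q then 4 else 0)" using weight_v S(1) by blast
    qed
    moreover have "S \<subseteq> V" using S(1) neighbours_subset by blast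
    then have "card S * (card S - 1) \<le> (\<Sum>v\<in>S. weight S v)"
      using sum_weight_ge_clique[OF \<open>S \<subseteq> V\<close>] S(2) by simp
    ultimately show False using quadratic[OF S(2)] S(2) Q(2) n_ge_10 by linarith
  next
    case False
    then have Dx: "d x = n - 1" using D by linarith
    define S where "S = insert x (N x - {u0})"
    have S_V: "S \<subseteq> V" using x_in_V neighbours_subset by (auto simp: S_def)
    have card_S: "card S = n - 1" using not_self_neighbour[of x] u0 Dx n_ge_10 by (simp add: S_def)
    have "N x - S = {u0}" using u0 not_self_neighbour[of x] by (auto simp: S_def)
    then have "(\<Sum>v\<in>S. weight S v) = d x + 1 + (\<Sum>v\<in>N x - {u0}. weight S v)"
      unfolding S_def using not_self_neighbour[of x] by (simp add: sum.insert)
    moreover have "(\<Sum>v\<in>N x - {u0}. weight S v) \<le> 4 * card (N x - {u0}) + 4 * card Q"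
      by (rule sum_le_with_exceptions[OF _ _ Q(1)]) (use weight_v in auto)
    moreover have "card (N x - {u0}) = n - 2" using u0 Dx by simp
    moreover have "card S * (card S - 1) \<le> (\<Sum>v\<in>S. weight S v)"
      using sum_weight_ge_clique[OF S_V] card_S by simp
    ultimately show False using quadratic[OF card_S] card_S Dx Q(2) n_ge_10 by linarith
  qed
qed

lemma degree_eq_n_minus_5:
  assumes conn: "connected_graph V E"
  shows "d x = n - 5"
proof -
  have exit: "\<exists>u\<in>N x. \<exists>w\<in>N u. w \<notin> closed_nb" if "d x \<le> n - 2"
  proof -
    have "\<not> V \<subseteq> closed_nb"
    proof
      assume "V \<subseteq> closed_nb"
      then have "card V \<le> card closed_nb" by (rule card_mono[rotated]) simp
      then show False using card_closed_nb that n_le_card_V n_ge_10 by linarith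
    qed
    then obtain y where "y \<in> V" "y \<notin> closed_nb" by blast
    then show ?thesis using connected_exit_closed_neighbourhood[OF conn x_in_V] by blast
  qed
  have "n - 5 \<le> d x" by (rule n_minus_5_le_max_degree[OF x_in_V max_deg])
  moreover have "d x < n - 1" by (rule max_degree_lt_n_minus_1)
  moreover have "d x \<noteq> n - 4" by (rule max_degree_ne_n_minus_4)
  moreover have "d x \<noteq> n - 3" "d x \<noteq> n - 2" if "d x \<le> n - 2"
    using exit[OF that] max_degree_ne_n_minus_3 max_degree_ne_n_minus_2 by blast+
  ultimately show ?thesis using n_ge_10 by linarith
qed

end

lemma (in Tpp_extremal) max_degree_eq_n_minus_5:
  assumes "connected_graph V E"
  shows "max_degree V E = n - 5"
proof -
  have "V \<noteq> {}" using n_le_card_V n_ge_10 by auto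
  then have "max_degree V E \<in> degree V E ` V"
    unfolding max_degree_def using finite_V by (intro Max_in) auto
  then obtain x where x: "x \<in> V" "max_degree V E = d x" by (auto simp: degree_eq_card_neighbours)
  have "\<forall>v\<in>V. d v \<le> d x"
  proof
    fix v assume "v \<in> V"
    then have "degree V E v \<le> max_degree V E"
      unfolding max_degree_def using finite_V by (intro Max_ge) auto
    then show "d v \<le> d x" using x(2) by (simp add: degree_eq_card_neighbours)
  qed
  then interpret Tpp_extremal_max_vertex V E n x by unfold_locales (rule x(1))
  show ?thesis using degree_eq_n_minus_5[OF assms] x(2) by simp
qed

theorem lemma3p2:
  fixes p n :: nat and V :: "'a set" and E :: "'a set set"
  assumes "10 \<le> n" and "n \<le> p"
    and "in_Ex p (Tpp_V n) (Tpp_E n) V E"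
    and "connected_graph V E"
  shows "max_degree V E = n - 5"
proof -
  have simple: "simple_graph V E" and card_V: "card V = p"
    and "\<not> contains_copy V E (Tpp_V n) (Tpp_E n)" and "card E = ex_num p (Tpp_V n) (Tpp_E n)"
    using assms(3) by (auto simp: in_Ex_def)
  then interpret Tpp_extremal V E n
    using assms(1,2) card_le_ex_num[OF _ card_V] by unfold_locales auto
  show ?thesis using max_degree_eq_n_minus_5[OF assms(4)] .
qed
end
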